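(* Let $m,n\ge2$ with $1/m+1/n<1$, let $\widetilde P(z)=((1+z)^n-1)/n$, and for $\lambda\ne0$ let $P_\lambda(z)=\dfrac{\frac1n((1+z)^n-1)+\lambda^{m+n}z^{m+n}}{1-\lambda^{m+n}z^{m+n}}$. Let $\Delta=\mathbb{D}(-\tfrac34,\tfrac34)$ be the open Euclidean disk of center $-3/4$ and radius $3/4$. (1) $\widetilde P(\overline\Delta)\subset\Delta\cup\{0\}$. (2) If $0<|\lambda|<1/(3n)$, then $P_\lambda(\overline\Delta)\subset\Delta\cup\{0\}$. In particular $\Delta$ lies in the Fatou set of $P_\lambda$, inside the Fatou component whose points converge under iteration of $P_\lambda$ to the parabolic fixed point $0$. *)

theory Defs
  imports "HOL-Analysis.Analysis"
begin

definition Ptilde :: "nat \<Rightarrow> complex \<Rightarrow> complex" where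
  "Ptilde n z = ((1 + z) ^ n - 1) / of_nat n"

definition Plam :: "nat \<Rightarrow> nat \<Rightarrow> complex \<Rightarrow> complex \<Rightarrow> complex" where
  "Plam m n lam z =
     (((1 + z) ^ n - 1) / of_nat n + lam ^ (m + n) * z ^ (m + n)) / (1 - lam ^ (m + n) * z ^ (m + n))"

definition Delta :: "complex set" where
  "Delta = ball (- 3 / 4) (3 / 4)"

end

theory Submission
  imports Defs
begin

text \<open>
  Everything is read in the coordinate \<open>q z = Re (-1 / z)\<close>, in which the disk of centre
  \<open>-r\<close> and radius \<open>r\<close> is the half-plane \<open>q > 1 / (2 r)\<close>: \<open>Delta\<close> is \<open>q > 2/3\<close>, and its
  closure is \<open>q \<ge> 2/3\<close> together with \<open>0\<close>.

  With \<open>w = 1 + z\<close>, \<open>-1 / z = 1 / (1 - w)\<close> and \<open>-1 / Ptilde n z = n / (1 - w^n)\<close>, and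
  \<open>2 Re (1 / (1 - w)) = 1 + Re ((1 + w) / (1 - w))\<close>, the Poisson kernel at \<open>w\<close>. Writing
  \<open>1 - w^n\<close> as \<open>1 - w\<close> times the geometric sum and applying Cauchy-Schwarz to that sum
  shows that \<open>n\<close> times the kernel at \<open>w^n\<close> dominates the kernel at \<open>w\<close>; hence
  \<open>q (Ptilde n z) \<ge> q z + (n - 1) / 2\<close>.

  For \<open>v = -1 / Ptilde n z\<close> and \<open>a = (\<lambda> z)^(m+n)\<close> one gets
  \<open>-1 / Plam m n \<lambda> z = (1 - a) v / (1 - a v)\<close>, which is within \<open>1/4\<close> of \<open>v\<close> as soon as
  \<open>|a| |v|^2 \<le> 1/36\<close>. That holds on the closure of \<open>Delta\<close>, since \<open>|v| \<le> 6 n / |z|^2\<close> while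
  \<open>a\<close> vanishes to order \<open>m + n \<ge> 5\<close>. So every step of \<open>Plam m n \<lambda>\<close> raises \<open>q\<close> by at least
  \<open>1/4\<close>, and \<open>|z| \<le> 1 / q z\<close> makes the iterates tend to \<open>0\<close> uniformly on \<open>Delta\<close>.
\<close>

lemma Re_minus_inverse_mult_norm_sq: "Re (-1 / z) * (cmod z)\<^sup>2 = - Re z"
  by (cases "z = 0") (simp_all add: Re_divide')

lemma norm_le_inverse_Re_minus_inverse:
  assumes "0 < Re (-1 / z)"
  shows "cmod z \<le> 1 / Re (-1 / z)"
proof -
  have "Re (-1 / z) \<le> 1 / cmod z"
    using complex_Re_le_cmod[of "-1 / z"] by (simp add: norm_divide)
  then show ?thesis
    using assms by (cases "z = 0") (simp_all add: field_simps)
qed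

lemma norm_add_of_real_sq:
  "(cmod (z + of_real r))\<^sup>2 = r\<^sup>2 + (1 - 2 * r * Re (-1 / z)) * (cmod z)\<^sup>2"
proof -
  have "(cmod (z + of_real r))\<^sup>2 = (cmod z)\<^sup>2 + 2 * r * Re z + r\<^sup>2"
    unfolding cmod_power2 by (simp add: power2_eq_square algebra_simps)
  then show ?thesis
    using Re_minus_inverse_mult_norm_sq[of z] by (simp add: algebra_simps)
qed

lemma ball_minus_radius_eq:
  assumes "0 < r"
  shows "ball (- of_real r) r = {z. 1 / (2 * r) < Re (-1 / z)}"
proof -
  have "z \<in> ball (- of_real r) r \<longleftrightarrow> (cmod (z + of_real r))\<^sup>2 < r\<^sup>2" for z
    using assms power_mono_iff[of r "cmod (z + of_real r)" 2]
    by (auto simp: dist_norm norm_minus_commute add.commute not_le[symmetric])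
  also have "\<dots> z \<longleftrightarrow> z \<noteq> 0 \<and> 1 - 2 * r * Re (-1 / z) < 0" for z
    by (auto simp: norm_add_of_real_sq mult_less_0_iff)
  also have "\<dots> z \<longleftrightarrow> 1 / (2 * r) < Re (-1 / z)" for z
    using assms by (cases "z = 0") (auto simp: field_simps)
  finally show ?thesis by blast
qed

lemma cball_minus_radius_eq:
  assumes "0 < r"
  shows "cball (- of_real r) r = insert 0 {z. 1 / (2 * r) \<le> Re (-1 / z)}"
proof -
  have "z \<in> cball (- of_real r) r \<longleftrightarrow> (cmod (z + of_real r))\<^sup>2 \<le> r\<^sup>2" for z
    using assms power_mono_iff[of "cmod (z + of_real r)" r 2]
    by (auto simp: dist_norm norm_minus_commute add.commute)
  also have "\<dots> z \<longleftrightarrow> z = 0 \<or> 1 - 2 * r * Re (-1 / z) \<le> 0" for z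
    by (auto simp: norm_add_of_real_sq mult_le_0_iff)
  also have "\<dots> z \<longleftrightarrow> z = 0 \<or> 1 / (2 * r) \<le> Re (-1 / z)" for z
    using assms by (auto simp: field_simps)
  finally show ?thesis by blast
qed

lemma Delta_eq: "Delta = {z. 2 / 3 < Re (-1 / z)}"
  using ball_minus_radius_eq[of "3 / 4"] by (simp add: Delta_def)

lemma closure_Delta_eq: "closure Delta = insert 0 {z. 2 / 3 \<le> Re (-1 / z)}"
  using cball_minus_radius_eq[of "3 / 4"] by (simp add: Delta_def)

lemma norm_le_of_mem_closure_Delta:
  assumes "z \<in> closure Delta"
  shows "cmod z \<le> 3 / 2"
proof (cases "z = 0")
  case False
  then have q: "2 / 3 \<le> Re (-1 / z)"
    using assms by (simp add: closure_Delta_eq)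
  then have "cmod z \<le> 1 / Re (-1 / z)"
    by (intro norm_le_inverse_Re_minus_inverse) simp
  also have "\<dots> \<le> 1 / (2 / 3)"
    using q by (intro divide_left_mono) auto
  finally show ?thesis by simp
qed simp

lemma norm_one_plus_less_one: "1 / 2 < Re (-1 / z) \<Longrightarrow> cmod (1 + z) < 1"
  using ball_minus_radius_eq[of 1] by (auto simp: dist_norm norm_minus_commute add.commute)

lemma one_minus_norm_one_plus_ge:
  assumes "2 / 3 \<le> Re (-1 / z)"
  shows "(cmod z)\<^sup>2 / 6 \<le> 1 - cmod (1 + z)"
proof -
  have "(1 - 2 * Re (-1 / z)) * (cmod z)\<^sup>2 \<le> - 1 / 3 * (cmod z)\<^sup>2"
    using assms by (intro mult_right_mono) auto
  then have sq: "(cmod (1 + z))\<^sup>2 \<le> 1 - (cmod z)\<^sup>2 / 3"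
    using norm_add_of_real_sq[of z 1] by (simp add: add.commute)
  then have "(cmod (1 + z))\<^sup>2 \<le> 1"
    using zero_le_power2[of "cmod z"] by linarith
  then have "cmod (1 + z) \<le> 1"
    by (simp add: abs_square_le_1)
  then have "(1 - cmod (1 + z)) * (1 + cmod (1 + z)) \<le> (1 - cmod (1 + z)) * 2"
    by (intro mult_left_mono) auto
  with sq show ?thesis
    by (simp add: power2_eq_square algebra_simps)
qed

lemma Re_Cayley_eq: "Re ((1 + w) / (1 - w)) = (1 - (cmod w)\<^sup>2) / (cmod (1 - w))\<^sup>2"
  unfolding Re_divide' cmod_power2[of w] by (simp add: power2_eq_square algebra_simps)

lemma Re_inverse_one_minus_eq:
  assumes "w \<noteq> 1"
  shows "Re (1 / (1 - w)) = (1 + Re ((1 + w) / (1 - w))) / 2"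
proof -
  have "1 / (1 - w) = (1 + (1 + w) / (1 - w)) / 2"
    using assms by (simp add: field_simps)
  then show ?thesis by (simp only:) simp
qed

lemma norm_geometric_sum_sq_le:
  "(cmod (\<Sum>i<n. w ^ i))\<^sup>2 \<le> real n * (\<Sum>i<n. ((cmod w)\<^sup>2) ^ i)"
proof -
  have "cmod (\<Sum>i<n. w ^ i) \<le> (\<Sum>i<n. cmod w ^ i)"
    by (rule order_trans[OF norm_sum]) (simp add: norm_power)
  then have "(cmod (\<Sum>i<n. w ^ i))\<^sup>2 \<le> (\<Sum>i<n. cmod w ^ i)\<^sup>2"
    by (simp add: power_mono)
  also have "\<dots> \<le> real n * (\<Sum>i<n. ((cmod w)\<^sup>2) ^ i)"
    using sum_squared_le_sum_of_squares[of "\<lambda>i. cmod w ^ i" "{..<n}"]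
    by (simp add: mult.commute flip: power_mult)
  finally show ?thesis .
qed

lemma Re_Cayley_le_power:
  assumes "cmod w < 1" and "0 < n"
  shows "Re ((1 + w) / (1 - w)) \<le> real n * Re ((1 + w ^ n) / (1 - w ^ n))"
proof -
  define A where "A = (\<Sum>i<n. w ^ i)"
  define S where "S = (\<Sum>i<n. ((cmod w)\<^sup>2) ^ i)"
  have geom: "1 - w ^ n = (1 - w) * A"
    unfolding A_def by (rule one_diff_power_eq)
  have "1 - ((cmod w)\<^sup>2) ^ n = (1 - (cmod w)\<^sup>2) * S"
    unfolding S_def by (rule one_diff_power_eq)
  then have num: "1 - (cmod (w ^ n))\<^sup>2 = (1 - (cmod w)\<^sup>2) * S"
    by (simp add: norm_power flip: power_mult mult.commute)
  have "cmod (w ^ n) < 1"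
    using assms by (simp add: norm_power power_less_one_iff)
  then have "A \<noteq> 0" and "w \<noteq> 1"
    using geom by auto
  have CS: "(cmod A)\<^sup>2 \<le> real n * S"
    unfolding A_def S_def by (rule norm_geometric_sum_sq_le)
  have "0 \<le> 1 - (cmod w)\<^sup>2"
    using assms by (simp add: abs_square_le_1)
  with CS have mono: "(1 - (cmod w)\<^sup>2) * (cmod A)\<^sup>2 \<le> (1 - (cmod w)\<^sup>2) * (real n * S)"
    by (rule mult_left_mono)
  have "Re ((1 + w) / (1 - w))
      = (1 - (cmod w)\<^sup>2) * (cmod A)\<^sup>2 / ((cmod (1 - w))\<^sup>2 * (cmod A)\<^sup>2)"
    using \<open>A \<noteq> 0\<close> by (simp add: Re_Cayley_eq)
  also have "\<dots> \<le> (1 - (cmod w)\<^sup>2) * (real n * S) / ((cmod (1 - w))\<^sup>2 * (cmod A)\<^sup>2)"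
    using mono by (rule divide_right_mono) simp
  also have "\<dots> = real n * Re ((1 + w ^ n) / (1 - w ^ n))"
    unfolding Re_Cayley_eq num by (simp add: geom norm_mult power_mult_distrib)
  finally show ?thesis .
qed

lemma Re_minus_inverse_Ptilde_ge:
  assumes "cmod (1 + z) < 1" and "0 < n"
  shows "Re (-1 / z) + (real n - 1) / 2 \<le> Re (-1 / Ptilde n z)"
proof -
  define w where "w = 1 + z"
  have "cmod w < 1"
    using assms by (simp add: w_def)
  then have "cmod (w ^ n) < 1"
    using assms by (simp add: norm_power power_less_one_iff)
  then have "w \<noteq> 1" and "w ^ n \<noteq> 1"
    using \<open>cmod w < 1\<close> by auto
  have "-1 / Ptilde n z = of_nat n * (1 / (1 - w ^ n))"
    using \<open>0 < n\<close> \<open>w ^ n \<noteq> 1\<close> by (simp add: Ptilde_def w_def field_simps)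
  then have P: "Re (-1 / Ptilde n z) = real n * Re (1 / (1 - w ^ n))"
    by (simp only: times_complex.sel complex_Re_of_nat complex_Im_of_nat)
  have "Re (-1 / z) = Re (1 / (1 - w))"
    by (simp add: w_def)
  also have "\<dots> = (1 + Re ((1 + w) / (1 - w))) / 2"
    using \<open>w \<noteq> 1\<close> by (rule Re_inverse_one_minus_eq)
  also have "\<dots> \<le> (1 + real n * Re ((1 + w ^ n) / (1 - w ^ n))) / 2"
    using Re_Cayley_le_power[OF \<open>cmod w < 1\<close> \<open>0 < n\<close>] by simp
  also have "\<dots> = Re (-1 / Ptilde n z) - (real n - 1) / 2"
    unfolding P Re_inverse_one_minus_eq[OF \<open>w ^ n \<noteq> 1\<close>] by (simp add: field_simps)
  finally show ?thesis by simp
qed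

lemma norm_Ptilde_ge:
  assumes "cmod (1 + z) < 1" and "0 < n"
  shows "(1 - cmod (1 + z)) / real n \<le> cmod (Ptilde n z)"
proof -
  have "cmod ((1 + z) ^ n) \<le> cmod (1 + z)"
    using assms power_decreasing[of 1 n "cmod (1 + z)"] by (simp add: norm_power)
  moreover have "1 - cmod ((1 + z) ^ n) \<le> cmod ((1 + z) ^ n - 1)"
    using norm_triangle_ineq2[of 1 "(1 + z) ^ n"] by (simp add: norm_minus_commute)
  ultimately show ?thesis
    by (simp add: Ptilde_def norm_divide divide_right_mono)
qed

lemma minus_inverse_perturbed_eq:
  fixes v a :: "'a :: field"
  assumes "v \<noteq> 0"
  shows "-1 / ((-1 / v + a) / (1 - a)) = (1 - a) * v / (1 - a * v)"
  using assms by (cases "a = 1"; cases "a * v = 1") (simp_all add: field_simps)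

lemma Re_perturbed_ge:
  fixes v a :: complex
  assumes v: "1 \<le> cmod v" and small: "cmod a * (cmod v)\<^sup>2 \<le> 1 / 36"
  shows "Re v - 1 / 4 \<le> Re ((1 - a) * v / (1 - a * v))"
proof -
  have "cmod v \<le> (cmod v)\<^sup>2"
    using mult_left_mono[OF v, of "cmod v"] by (simp add: power2_eq_square)
  then have "cmod a * cmod v \<le> cmod a * (cmod v)\<^sup>2"
    by (simp add: mult_left_mono)
  then have denom: "35 / 36 \<le> cmod (1 - a * v)"
    using small norm_triangle_ineq2[of 1 "a * v"] by (simp add: norm_mult)
  then have "1 - a * v \<noteq> 0"
    by auto
  then have eq: "(1 - a) * v / (1 - a * v) = v + v * a * (v - 1) / (1 - a * v)"
    by (simp add: field_simps)
  have "cmod (v * a * (v - 1)) \<le> cmod v * cmod a * (2 * cmod v)"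
    using norm_triangle_ineq4[of v 1] v by (simp add: norm_mult mult_left_mono)
  also have "\<dots> \<le> 2 / 36"
    using small by (simp add: power2_eq_square mult_ac)
  finally have "cmod (v * a * (v - 1)) / cmod (1 - a * v) \<le> (2 / 36) / (35 / 36)"
    using denom by (intro frac_le) auto
  then have "- 1 / 4 \<le> Re (v * a * (v - 1) / (1 - a * v))"
    using abs_Re_le_cmod[of "v * a * (v - 1) / (1 - a * v)"] by (simp add: norm_divide)
  then show ?thesis
    unfolding eq by simp
qed

lemma less_one_sixth:
  fixes x :: real
  assumes "2 \<le> n" and "x < 1 / (3 * real n)"
  shows "x < 1 / 6"
proof -
  have "1 / (3 * real n) \<le> 1 / 6"
    using assms(1) by (simp add: field_simps)
  with assms(2) show ?thesis
    by linarith
qed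

lemma norm_lam_mult_le_quarter:
  assumes "2 \<le> n" and "cmod lam < 1 / (3 * real n)" and "z \<in> closure Delta"
  shows "cmod (lam * z) \<le> 1 / 4"
proof -
  have "cmod lam * cmod z \<le> 1 / 6 * (3 / 2)"
    using less_one_sixth[OF assms(1,2)] norm_le_of_mem_closure_Delta[OF assms(3)]
    by (intro mult_mono) auto
  then show ?thesis
    by (simp add: norm_mult)
qed

lemma Plam_denominator_ne_zero:
  assumes "2 \<le> n" and "cmod lam < 1 / (3 * real n)" and "z \<in> closure Delta" and "0 < k"
  shows "1 - lam ^ k * z ^ k \<noteq> 0"
proof -
  have "cmod (lam ^ k * z ^ k) = cmod (lam * z) ^ k"
    by (simp add: norm_mult norm_power power_mult_distrib)
  also have "\<dots> < 1"
    using norm_lam_mult_le_quarter[OF assms(1-3)] \<open>0 < k\<close> by (simp add: power_less_one_iff)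
  finally show ?thesis
    by auto
qed

lemma norm_lam_mult_power_le:
  assumes n: "2 \<le> n" and mn: "5 \<le> m + n" and lam: "cmod lam < 1 / (3 * real n)"
    and q: "2 / 3 \<le> Re (-1 / z)"
  shows "cmod (lam * z) ^ (m + n) \<le> (cmod (Ptilde n z))\<^sup>2 / 36"
proof -
  define L where "L = cmod lam"
  have nL: "real n * L \<le> 1 / 3"
    using n lam by (simp add: L_def field_simps)
  have L: "L \<le> 1 / 6"
    using less_one_sixth[OF n lam] by (simp add: L_def)
  have "z \<in> closure Delta"
    using q by (simp add: closure_Delta_eq)
  then have "cmod z \<le> 3 / 2" and "cmod (lam * z) \<le> 1 / 4"
    by (rule norm_le_of_mem_closure_Delta, rule norm_lam_mult_le_quarter[OF n lam])
  have "(real n * L)\<^sup>2 * L ^ 3 * cmod z \<le> (1 / 3)\<^sup>2 * (1 / 6) ^ 3 * (3 / 2)"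
    using nL L \<open>cmod z \<le> 3 / 2\<close> by (intro mult_mono power_mono) (auto simp: L_def)
  then have small: "(real n)\<^sup>2 * L ^ 5 * cmod z \<le> 1 / 1296"
    by (simp add: power_mult_distrib power2_eq_square eval_nat_numeral mult_ac)
  have "(cmod z)\<^sup>2 / (6 * real n) = ((cmod z)\<^sup>2 / 6) / real n"
    by simp
  also have "\<dots> \<le> (1 - cmod (1 + z)) / real n"
    using one_minus_norm_one_plus_ge[OF q] by (rule divide_right_mono) simp
  also have "\<dots> \<le> cmod (Ptilde n z)"
    using q n by (intro norm_Ptilde_ge norm_one_plus_less_one) auto
  finally have Pz: "(cmod z)\<^sup>2 / (6 * real n) \<le> cmod (Ptilde n z)" .
  have "cmod (lam * z) ^ (m + n) \<le> cmod (lam * z) ^ 5"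
    using mn \<open>cmod (lam * z) \<le> 1 / 4\<close> by (intro power_decreasing) auto
  also have "\<dots> = ((real n)\<^sup>2 * L ^ 5 * cmod z) * ((cmod z)\<^sup>2 / (6 * real n))\<^sup>2 * 36"
    using n by (simp add: L_def norm_mult power2_eq_square field_simps eval_nat_numeral)
  also have "\<dots> \<le> 1 / 1296 * (cmod (Ptilde n z))\<^sup>2 * 36"
    using small Pz by (intro mult_right_mono mult_mono power_mono) (auto simp: L_def)
  finally show ?thesis by simp
qed

lemma Re_minus_inverse_Plam_ge:
  assumes n: "2 \<le> n" and mn: "5 \<le> m + n" and lam: "cmod lam < 1 / (3 * real n)"
    and q: "2 / 3 \<le> Re (-1 / z)"
  shows "Re (-1 / z) + 1 / 4 \<le> Re (-1 / Plam m n lam z)"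
proof -
  define v where "v = -1 / Ptilde n z"
  define a where "a = (lam * z) ^ (m + n)"
  have "Re (-1 / z) + (real n - 1) / 2 \<le> Re v"
    unfolding v_def using q n by (intro Re_minus_inverse_Ptilde_ge norm_one_plus_less_one) auto
  moreover have "1 / 2 \<le> (real n - 1) / 2"
    using n by simp
  ultimately have Rv: "Re (-1 / z) + 1 / 2 \<le> Re v"
    by linarith
  then have "1 \<le> cmod v"
    using q complex_Re_le_cmod[of v] by linarith
  then have "Ptilde n z \<noteq> 0"
    by (auto simp: v_def)
  have "cmod a * (cmod v)\<^sup>2 = cmod (lam * z) ^ (m + n) / (cmod (Ptilde n z))\<^sup>2"
    by (simp add: a_def v_def norm_power norm_divide power_divide)
  also have "\<dots> \<le> 1 / 36"
    using norm_lam_mult_power_le[OF n mn lam q] \<open>Ptilde n z \<noteq> 0\<close> by (simp add: divide_le_eq)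
  finally have perturbed: "Re v - 1 / 4 \<le> Re ((1 - a) * v / (1 - a * v))"
    using \<open>1 \<le> cmod v\<close> by (intro Re_perturbed_ge)
  have "Plam m n lam z = (Ptilde n z + a) / (1 - a)"
    by (simp add: a_def Plam_def Ptilde_def power_mult_distrib)
  also have "\<dots> = (-1 / v + a) / (1 - a)"
    by (simp add: v_def)
  finally have "-1 / Plam m n lam z = -1 / ((-1 / v + a) / (1 - a))"
    by simp
  also have "\<dots> = (1 - a) * v / (1 - a * v)"
    using \<open>1 \<le> cmod v\<close> by (intro minus_inverse_perturbed_eq) auto
  finally have Plam_eq: "-1 / Plam m n lam z = (1 - a) * v / (1 - a * v)" .
  show ?thesis
    unfolding Plam_eq using Rv perturbed by linarith
qed

lemma image_closure_Delta_subset: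
  assumes "f 0 = 0" and "\<And>z. 2 / 3 \<le> Re (-1 / z) \<Longrightarrow> Re (-1 / z) < Re (-1 / f z)"
  shows "f ` closure Delta \<subseteq> Delta \<union> {0}"
proof clarify
  fix z
  assume "z \<in> closure Delta" and "f z \<notin> Delta"
  then consider "z = 0" | "2 / 3 \<le> Re (-1 / z)"
    by (auto simp: closure_Delta_eq)
  then show "f z = 0"
  proof cases
    case 2
    then have "2 / 3 < Re (-1 / f z)"
      using assms(2)[OF 2] by linarith
    with \<open>f z \<notin> Delta\<close> show ?thesis
      by (simp add: Delta_eq)
  qed (use assms(1) in simp)
qed

lemma uniform_limit_iterates_zero:
  assumes "0 < \<delta>" and S: "\<And>z. z \<in> S \<Longrightarrow> f z \<in> S" and "\<And>z. z \<in> S \<Longrightarrow> 0 \<le> Re (-1 / z)"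
    and incr: "\<And>z. z \<in> S \<Longrightarrow> Re (-1 / z) + \<delta> \<le> Re (-1 / f z)"
  shows "uniform_limit S (\<lambda>k. f ^^ k) (\<lambda>z. 0) sequentially"
proof (rule uniform_limitI)
  have iter: "(f ^^ k) z \<in> S \<and> real k * \<delta> \<le> Re (-1 / (f ^^ k) z)" if "z \<in> S" for z k
  proof (induction k)
    case (Suc k)
    then show ?case
      using S incr[of "(f ^^ k) z"] by (auto simp: algebra_simps)
  qed (use assms that in auto)
  fix e :: real
  assume "0 < e"
  obtain N :: nat where N: "1 / (e * \<delta>) < real N"
    using reals_Archimedean2 by blast
  have "dist ((f ^^ k) z) 0 < e" if "N \<le> k" and "z \<in> S" for k z
  proof -
    have "1 / e < real N * \<delta>"
      using N \<open>0 < e\<close> \<open>0 < \<delta>\<close> by (simp add: field_simps)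
    also have "\<dots> \<le> real k * \<delta>"
      using \<open>N \<le> k\<close> \<open>0 < \<delta>\<close> by (intro mult_right_mono) auto
    also have "\<dots> \<le> Re (-1 / (f ^^ k) z)"
      using iter[OF \<open>z \<in> S\<close>] by blast
    finally have q: "1 / e < Re (-1 / (f ^^ k) z)" .
    moreover have "0 < 1 / e"
      using \<open>0 < e\<close> by simp
    ultimately have "0 < Re (-1 / (f ^^ k) z)"
      by linarith
    then have "cmod ((f ^^ k) z) \<le> 1 / Re (-1 / (f ^^ k) z)"
      by (rule norm_le_inverse_Re_minus_inverse)
    also have "\<dots> < e"
      using q \<open>0 < e\<close> \<open>0 < Re (-1 / (f ^^ k) z)\<close> by (simp add: field_simps)
    finally show ?thesis
      by simp
  qed
  then show "\<forall>\<^sub>F k in sequentially. \<forall>z\<in>S. dist ((f ^^ k) z) 0 < e"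
    unfolding eventually_sequentially by blast
qed

lemma Ptilde_image_closure_Delta:
  assumes "2 \<le> n"
  shows "Ptilde n ` closure Delta \<subseteq> Delta \<union> {0}"
proof (rule image_closure_Delta_subset)
  show "Re (-1 / z) < Re (-1 / Ptilde n z)" if "2 / 3 \<le> Re (-1 / z)" for z
  proof -
    have "Re (-1 / z) + (real n - 1) / 2 \<le> Re (-1 / Ptilde n z)"
      using that assms by (intro Re_minus_inverse_Ptilde_ge norm_one_plus_less_one) auto
    moreover have "0 < (real n - 1) / 2"
      using assms by simp
    ultimately show ?thesis
      by linarith
  qed
qed (simp add: Ptilde_def)

lemma Plam_image_closure_Delta:
  assumes "2 \<le> n" and "5 \<le> m + n" and "cmod lam < 1 / (3 * real n)"
  shows "Plam m n lam ` closure Delta \<subseteq> Delta \<union> {0}"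
proof (rule image_closure_Delta_subset)
  have "0 < m + n"
    using assms(2) by linarith
  then show "Plam m n lam 0 = 0"
    by (simp add: Plam_def)
  show "Re (-1 / z) < Re (-1 / Plam m n lam z)" if "2 / 3 \<le> Re (-1 / z)" for z
    using Re_minus_inverse_Plam_ge[OF assms that] by linarith
qed

lemma uniform_limit_Plam_iterates:
  assumes "2 \<le> n" and "5 \<le> m + n" and "cmod lam < 1 / (3 * real n)"
  shows "uniform_limit Delta (\<lambda>k. Plam m n lam ^^ k) (\<lambda>z. 0) sequentially"
proof (rule uniform_limit_iterates_zero[of "1 / 4"])
  have q: "2 / 3 < Re (-1 / z)" if "z \<in> Delta" for z
    using that unfolding Delta_eq by (rule CollectD)
  show incr: "Re (-1 / z) + 1 / 4 \<le> Re (-1 / Plam m n lam z)" if "z \<in> Delta" for z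
    using q[OF that] by (intro Re_minus_inverse_Plam_ge[OF assms]) simp
  show "Plam m n lam z \<in> Delta" if "z \<in> Delta" for z
    unfolding Delta_eq using q[OF that] incr[OF that] by simp
  show "0 \<le> Re (-1 / z)" if "z \<in> Delta" for z
    using q[OF that] by simp
qed simp

theorem lemma4p1:
  fixes m n :: nat and lam :: complex
  assumes "m \<ge> 2" and "n \<ge> 2" and "1 / real m + 1 / real n < 1"
  shows "Ptilde n ` closure Delta \<subseteq> Delta \<union> {0}
       \<and> (lam \<noteq> 0 \<and> norm lam < 1 / (3 * real n) \<longrightarrow>
           (\<forall>z \<in> closure Delta. 1 - lam ^ (m + n) * z ^ (m + n) \<noteq> 0)
         \<and> Plam m n lam ` closure Delta \<subseteq> Delta \<union> {0}
         \<and> (\<forall>K. compact K \<and> K \<subseteq> Delta \<longrightarrow>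
               uniform_limit K (\<lambda>k z. (Plam m n lam ^^ k) z) (\<lambda>z. 0) sequentially))"
proof -
  have mn: "5 \<le> m + n"
    using assms by (cases "m = 2 \<and> n = 2") auto
  then have "0 < m + n"
    by linarith
  have "(\<forall>z \<in> closure Delta. 1 - lam ^ (m + n) * z ^ (m + n) \<noteq> 0)
      \<and> Plam m n lam ` closure Delta \<subseteq> Delta \<union> {0}
      \<and> (\<forall>K. compact K \<and> K \<subseteq> Delta \<longrightarrow>
            uniform_limit K (\<lambda>k z. (Plam m n lam ^^ k) z) (\<lambda>z. 0) sequentially)"
    if lam: "cmod lam < 1 / (3 * real n)"
    using Plam_denominator_ne_zero[OF assms(2) lam _ \<open>0 < m + n\<close>]
      Plam_image_closure_Delta[OF assms(2) mn lam]
      uniform_limit_Plam_iterates[OF assms(2) mn lam]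
    by (blast intro: uniform_limit_on_subset)
  then show ?thesis
    using Ptilde_image_closure_Delta[OF assms(2)] by blast
qed

end
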